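(* (1) There exists $C>0$ such that for all $f\in L^{2}(\mathbb{R})$ with $xf\in L^{2}(\mathbb{R})$ and all $t>0$, \[ \Big\|e^{it\partial_{x}^{2}}f(x)-\frac{e^{i\frac{x^{2}}{4t}}}{(4i\pi t)^{1/2}}\widehat{f}\Big(\frac{x}{2t}\Big)\Big\|_{L^{\infty}_{x}(\mathbb{R})}\leq Ct^{-\frac34}\|xf\|_{L^{2}_{x}(\mathbb{R})}. \] (2) Let $U$ be a function of $t$ with values in functions on $\mathbb{R}\times\mathbb{T}^d$ and let $F(t)=e^{-it\Delta}U(t)$ be its profile. Then for all $T\geq1$ and $t\in[1,T]$, \[ t^{\frac12}\|U(t)\|_{L^{\infty}_{x}h^{s}_{y}}\lesssim\|F(t)\|_{Z}+t^{-\frac14}\|F(t)\|_{S}\lesssim\|F\|_{X_{T}} . \]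
   Context: Here $\widehat{f}$ is a suitably normalized Fourier transform on $\mathbb{R}$. $\mathrm{A}$ is a real symmetric positive definite $d\times d$ matrix, $\lambda_n^2=n^\intercal\mathrm{A}n$; $\Delta=\partial_{x}^{2}+\operatorname{div}(\mathrm{A}\nabla_{y})$ on $\mathbb{R}\times\mathbb{T}^d$, $\mathbb{T}^d=\mathbb{R}^d/(2\pi\mathbb{Z})^d$. Fixed parameters: $s>\frac{d}{2}$ (in the paper $s>\frac d2+\frac{4\tau}{c(d)}$), $\sigma>0$, and $\delta>0$ sufficiently small. Clusters: $(\mathscr{C}_{\alpha})_{\alpha\geq0}$ is a fixed partition of $\mathbb{Z}^{d}$ with $0\in\mathscr{C}_0$, $\mathscr{C}_0$ bounded, and $\max_{\mathscr{C}_{\alpha}}|n|\leq2\min_{\mathscr{C}_{\alpha}}|n|$ for $\alpha\geq1$ (the Berti–Maspero cluster decomposition); $K_0=1$, $K_{\alpha}=\min_{n\in\mathscr{C}_{\alpha}}|n|$ for $\alpha\ge1$. For $u=\sum u_n e^{in\cdot y}$ on $\mathbb{T}^d$: $\pi_{\alpha}u=\sum_{n\in\mathscr{C}_{\alpha}}u_{n}e^{in\cdot y}$, $\|u\|_{\ell^2}=(\sum|u_n|^2)^{1/2}$, $\|u\|_{h^{s}}=(\sum_{\alpha}K_{\alpha}^{2s}\|\pi_{\alpha}u\|_{\ell^{2}}^{2})^{1/2}$. For $F$ on $\mathbb{R}\times\mathbb{T}^{d}$: $F_{n}(x)=(2\pi)^{-d}\int e^{-in\cdot y}F(x,y)dy$,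 $\widehat{F}_{n}(\xi)=(2\pi)^{-(d+1)}\int e^{-i(\xi x+n\cdot y)}F\,dxdy$, $\widehat F(\xi,y)=\sum_n\widehat F_n(\xi)e^{in\cdot y}$. $\|F\|_{L^{\infty}_{x}h^{s}_{y}}=\sup_x\|F(x,\cdot)\|_{h^s}$, $\|F\|_{L^{2}_{x}h^{s}_{y}}=\|\,\|F(x,\cdot)\|_{h^{s}}\|_{L^{2}_{x}}$, $\|F\|_{H^{s}_{x}\ell^{2}_{y}}=(\sum_{n}\|F_{n}\|_{H^{s}(\mathbb{R})}^{2})^{1/2}$, $\|F\|_{H^{s}_{x,y}}=(\|F\|_{L^{2}_{x}h^{s}_{y}}^{2}+\|F\|_{H^{s}_{x}\ell^{2}_{y}}^{2})^{1/2}$. $\|F\|_{S}=\|(1-\partial_{x}^{2})^{\sigma/2}F\|_{H^{s}_{x,y}}+\|xF\|_{L^{2}_{x}h^{s}_{y}}$; $\|F\|_{Z}=\sup_{\xi\in\mathbb{R}}\|\widehat{F}(\xi,\cdot)\|_{h^{s}}$; for time-dependent $F$, $\|F\|_{X_{T}}=\sup_{0\leq t\leq T}\big(\|F(t)\|_{Z}+\langle t\rangle^{-\delta}\|F(t)\|_{S}+\langle t\rangle^{1-\delta}\|\partial_{t}F(t)\|_{S}\big)$, $\langle t\rangle=(1+t^2)^{1/2}$. Implicit constants in $\lesssim$ depend only on $d,\mathrm{A},s,\sigma,\delta$. *)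

theory Defs
  imports "HOL-Analysis.Analysis"
begin

definition ivec :: "int^'d \<Rightarrow> real^'d" where
  "ivec n = (\<chi> i. real_of_int (n $ i))"

definition vnorm :: "int^'d \<Rightarrow> real" where
  "vnorm n = norm (ivec n)"

definition lam2 :: "real^'d^'d \<Rightarrow> int^'d \<Rightarrow> real" where
  "lam2 A n = ivec n \<bullet> (A *v ivec n)"

text \<open>Berti--Maspero type cluster decomposition (C_alpha), alpha >= 0, of Z^d.\<close>

definition cluster_partition :: "(nat \<Rightarrow> (int^'d) set) \<Rightarrow> bool" where
  "cluster_partition Cl \<longleftrightarrow>
     (\<forall>\<alpha> \<beta>. \<alpha> \<noteq> \<beta> \<longrightarrow> Cl \<alpha> \<inter> Cl \<beta> = {}) \<and> (\<Union>\<alpha>. Cl \<alpha>) = UNIV \<and>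
     (\<forall>\<alpha>. Cl \<alpha> \<noteq> {}) \<and> 0 \<in> Cl 0 \<and> bounded (ivec ` Cl 0) \<and>
     (\<forall>\<alpha>\<ge>1. \<forall>m\<in>Cl \<alpha>. \<forall>n\<in>Cl \<alpha>. vnorm m \<le> 2 * vnorm n)"

definition Kc :: "(nat \<Rightarrow> (int^'d) set) \<Rightarrow> nat \<Rightarrow> real" where
  "Kc Cl \<alpha> = (if \<alpha> = 0 then 1 else Inf (vnorm ` Cl \<alpha>))"

text \<open>Square root on [0,\<infinity>]; all norms below are [0,\<infinity>]-valued (so that a
  norm which is infinite is infinite rather than a junk real value).\<close>

definition esqrt :: "ennreal \<Rightarrow> ennreal" where
  "esqrt v = (if v = \<infinity> then \<infinity> else ennreal (sqrt (enn2real v)))"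

text \<open>h^s norm of a function on T^d given by its Fourier coefficients u_n.\<close>

definition hs_sq :: "(nat \<Rightarrow> (int^'d) set) \<Rightarrow> real \<Rightarrow> (int^'d \<Rightarrow> complex) \<Rightarrow> ennreal" where
  "hs_sq Cl s u = (\<Sum>\<alpha>. ennreal (Kc Cl \<alpha> powr (2 * s)) * (\<integral>\<^sup>+ n. ennreal ((cmod (u n))\<^sup>2) \<partial>count_space (Cl \<alpha>)))"

definition hs_norm :: "(nat \<Rightarrow> (int^'d) set) \<Rightarrow> real \<Rightarrow> (int^'d \<Rightarrow> complex) \<Rightarrow> ennreal" where
  "hs_norm Cl s u = esqrt (hs_sq Cl s u)"

text \<open>Fourier transform on R: unnormalized (as needed in part (1)) and the normalized
  one of the context, hat F_n(xi) = (2 pi)^(-1) int e^(-i xi x) F_n(x) dx.\<close>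

definition fourier :: "(real \<Rightarrow> complex) \<Rightarrow> real \<Rightarrow> complex" where
  "fourier f \<xi> = (\<integral>x. cis (- (\<xi> * x)) * f x \<partial>lborel)"

definition fourierN :: "(real \<Rightarrow> complex) \<Rightarrow> real \<Rightarrow> complex" where
  "fourierN f \<xi> = fourier f \<xi> / complex_of_real (2 * pi)"

text \<open>Free Schroedinger group e^{it d_x^2} on R (t > 0), via its kernel
  (4 i pi t)^(-1/2) e^{i (x-y)^2/(4t)}, principal branch of the square root.\<close>

definition schr :: "real \<Rightarrow> (real \<Rightarrow> complex) \<Rightarrow> real \<Rightarrow> complex" where
  "schr t f x = (\<integral>y. cis ((x - y)\<^sup>2 / (4 * t)) * f y \<partial>lborel)
                 / csqrt (4 * \<i> * complex_of_real pi * complex_of_real t)"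

text \<open>Functions G on R x T^d are represented by their Fourier coefficients:
  G x n = G_n(x).  e^{it Delta} acts on the mode n as e^{-it lambda_n^2} e^{it d_x^2}.\<close>

definition evol :: "real^'d^'d \<Rightarrow> real \<Rightarrow> (real \<Rightarrow> int^'d \<Rightarrow> complex) \<Rightarrow> real \<Rightarrow> int^'d \<Rightarrow> complex" where
  "evol A t G x n = cis (- (t * lam2 A n)) * schr t (\<lambda>y. G y n) x"

definition Linf_hs :: "(nat \<Rightarrow> (int^'d) set) \<Rightarrow> real \<Rightarrow> (real \<Rightarrow> int^'d \<Rightarrow> complex) \<Rightarrow> ennreal" where
  "Linf_hs Cl s G = (SUP x. hs_norm Cl s (G x))"

definition L2hs :: "(nat \<Rightarrow> (int^'d) set) \<Rightarrow> real \<Rightarrow> (real \<Rightarrow> int^'d \<Rightarrow> complex) \<Rightarrow> ennreal" where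
  "L2hs Cl s G = esqrt (\<integral>\<^sup>+ x. hs_sq Cl s (G x) \<partial>lborel)"

text \<open>Every mode in L^1 \<inter> L^2 (R).  If this fails then the S norm is infinite
  (either some G_n is not in L^2, or G_n is in L^2 but not L^1, whence x G_n is not in L^2).\<close>

definition admissible :: "(real \<Rightarrow> 'n \<Rightarrow> complex) \<Rightarrow> bool" where
  "admissible G \<longleftrightarrow> (\<forall>n. integrable lborel (\<lambda>x. G x n) \<and>
                           integrable lborel (\<lambda>x. (cmod (G x n))\<^sup>2))"

text \<open>Squares of  ||(1 - d_x^2)^(sigma/2) G||_{L^2_x h^s_y}  and
  ||(1 - d_x^2)^(sigma/2) G||_{H^s_x l^2_y}, computed on the Fourier side
  (Plancherel: ||g||_{L^2}^2 = 2 pi ||hat g||_{L^2}^2 for the normalized transform).\<close>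

definition L2hs_J_sq :: "(nat \<Rightarrow> (int^'d) set) \<Rightarrow> real \<Rightarrow> real \<Rightarrow> (real \<Rightarrow> int^'d \<Rightarrow> complex) \<Rightarrow> ennreal" where
  "L2hs_J_sq Cl s \<sigma> G = ennreal (2 * pi) *
     (\<integral>\<^sup>+ \<xi>. ennreal ((1 + \<xi>\<^sup>2) powr \<sigma>) * hs_sq Cl s (\<lambda>n. fourierN (\<lambda>x. G x n) \<xi>) \<partial>lborel)"

definition Hsl2_J_sq :: "real \<Rightarrow> real \<Rightarrow> (real \<Rightarrow> int^'d \<Rightarrow> complex) \<Rightarrow> ennreal" where
  "Hsl2_J_sq s \<sigma> G = (\<integral>\<^sup>+ n. ennreal (2 * pi) *
     (\<integral>\<^sup>+ \<xi>. ennreal ((1 + \<xi>\<^sup>2) powr (\<sigma> + s)) * ennreal ((cmod (fourierN (\<lambda>x. G x n) \<xi>))\<^sup>2) \<partial>lborel)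
     \<partial>count_space UNIV)"

definition S_norm :: "(nat \<Rightarrow> (int^'d) set) \<Rightarrow> real \<Rightarrow> real \<Rightarrow> (real \<Rightarrow> int^'d \<Rightarrow> complex) \<Rightarrow> ennreal" where
  "S_norm Cl s \<sigma> G = (if admissible G then
      esqrt (L2hs_J_sq Cl s \<sigma> G + Hsl2_J_sq s \<sigma> G)
      + L2hs Cl s (\<lambda>x n. complex_of_real x * G x n)
    else \<infinity>)"

definition Z_norm :: "(nat \<Rightarrow> (int^'d) set) \<Rightarrow> real \<Rightarrow> (real \<Rightarrow> int^'d \<Rightarrow> complex) \<Rightarrow> ennreal" where
  "Z_norm Cl s G = (SUP \<xi>. hs_norm Cl s (\<lambda>n. fourierN (\<lambda>x. G x n) \<xi>))"

definition jbr :: "real \<Rightarrow> real" where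
  "jbr t = sqrt (1 + t\<^sup>2)"

definition dt_S_norm :: "(nat \<Rightarrow> (int^'d) set) \<Rightarrow> real \<Rightarrow> real \<Rightarrow> real \<Rightarrow> (real \<Rightarrow> real \<Rightarrow> int^'d \<Rightarrow> complex) \<Rightarrow> real \<Rightarrow> ennreal" where
  "dt_S_norm Cl s \<sigma> T F t =
     (if \<forall>x n. (\<lambda>\<tau>. F \<tau> x n) differentiable (at t within {0..T})
      then S_norm Cl s \<sigma> (\<lambda>x n. vector_derivative (\<lambda>\<tau>. F \<tau> x n) (at t within {0..T}))
      else \<infinity>)"

definition X_norm :: "(nat \<Rightarrow> (int^'d) set) \<Rightarrow> real \<Rightarrow> real \<Rightarrow> real \<Rightarrow> real \<Rightarrow> (real \<Rightarrow> real \<Rightarrow> int^'d \<Rightarrow> complex) \<Rightarrow> ennreal" where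
  "X_norm Cl s \<sigma> \<delta> T F = (SUP t\<in>{0..T}.
      Z_norm Cl s (F t) + ennreal (jbr t powr (- \<delta>)) * S_norm Cl s \<sigma> (F t)
      + ennreal (jbr t powr (1 - \<delta>)) * dt_S_norm Cl s \<sigma> T F t)"

end

theory Submission
  imports Defs "HOL-Probability.Sinc_Integral" "HOL-Probability.Characteristic_Functions"
begin

(* Expanding (x - y)^2 = x^2 - 2xy + y^2 in the Schroedinger kernel splits e^{it d_x^2} f into the
   stationary-phase term, a multiple of the Fourier transform of f at x/2t, plus an error whose
   integrand carries the factor e^{iy^2/4t} - 1. That factor is at most 3y^2/(4t + y^2), so
   Cauchy-Schwarz against |y f(y)| bounds the error by
   t^(-1/2) (int y^2/(4t + y^2)^2 dy)^(1/2) ||x f|| ~ t^(-3/4) ||x f||, which is (1).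
   Applied to every Fourier mode of the profile, (1) gives
   |U_n(t,x)|^2 <= 2 pi/t |F_n^(x/2t)|^2 + 8 t^(-3/2) ||x F_n||^2, and summing with the h^s weights
   yields the first inequality of (2). The second is t^(-1/4) <= 2 <t>^(-delta) for t >= 1 and
   0 <= delta <= 1/4. *)

lemma integrable_inverse_add_square:
  fixes a :: real assumes "a > 0"
  shows "integrable lborel (\<lambda>y. 1 / (a + y\<^sup>2))"
    and "(\<integral>y. 1 / (a + y\<^sup>2) \<partial>lborel) = pi / sqrt a"
proof -
  have int1: "integrable lborel (\<lambda>x::real. inverse (1 + x\<^sup>2))"
    using integrable_inverse_1_plus_square by (simp add: set_integrable_def)
  have lint1: "(\<integral>x. inverse (1 + x\<^sup>2) \<partial>lborel) = pi"
    using LBINT_inverse_1_plus_square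
    by (simp add: interval_lebesgue_integral_def set_lebesgue_integral_def)
  define c where "c = sqrt a"
  have c: "c > 0" "c\<^sup>2 = a" using assms by (auto simp: c_def)
  have rescale: "(\<lambda>x. 1 / (a + (c * x)\<^sup>2)) = (\<lambda>x. (1 / a) * inverse (1 + x\<^sup>2))"
    using c by (auto simp: fun_eq_iff field_simps)
  show "integrable lborel (\<lambda>y. 1 / (a + y\<^sup>2))"
    using lborel_integrable_real_affine_iff[of c "\<lambda>y. 1 / (a + y\<^sup>2)" 0] c int1
    by (simp add: rescale)
  have "(\<integral>y. 1 / (a + y\<^sup>2) \<partial>lborel) = c * (\<integral>x. 1 / (a + (c * x)\<^sup>2) \<partial>lborel)"
    using lborel_integral_real_affine[of c "\<lambda>y. 1 / (a + y\<^sup>2)" 0] c by simp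
  also have "\<dots> = c * (1 / a) * pi"
    unfolding rescale using lint1 by simp
  also have "\<dots> = pi / sqrt a"
    using c by (simp add: c_def field_simps)
  finally show "(\<integral>y. 1 / (a + y\<^sup>2) \<partial>lborel) = pi / sqrt a" .
qed

lemma norm_cis_minus_one_le_ratio:
  assumes "u \<ge> 0" shows "cmod (cis u - 1) \<le> 3 * u / (1 + u)"
proof -
  have "cmod (cis u - 1) \<le> min 2 u"
    using iexp_approx1[of u 0] iexp_approx2[of u 0] assms by (simp add: cis_conv_exp)
  also have "min 2 u \<le> 3 * u / (1 + u)"
    using assms by (auto simp: field_simps min_def intro: mult_left_mono)
  finally show ?thesis .
qed

lemma le_sqrt_mult_of_young_bounds:
  fixes X B J :: real
  assumes B: "B \<ge> 0" and J: "J \<ge> 0"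
    and young: "\<And>e. e > 0 \<Longrightarrow> X \<le> e * B / 2 + J / (2 * e)"
  shows "X \<le> sqrt (B * J)"
proof (cases "B > 0 \<and> J > 0")
  case True
  define e where "e = sqrt (J / B)"
  have "e > 0" "e * B = sqrt (B * J)" "J / e = sqrt (B * J)"
    using True by (auto simp: e_def real_sqrt_divide real_sqrt_mult field_simps)
  moreover have "J / (2 * e) = J / e / 2" by simp
  ultimately show ?thesis using young[of e] by linarith
next
  case False
  show ?thesis
  proof (rule ccontr)
    assume "\<not> ?thesis"
    then have X: "X > 0"
      using B J by (smt (verit) real_sqrt_ge_zero mult_nonneg_nonneg)
    consider "B = 0" | "J = 0" using False B J by linarith
    then show False
    proof cases
      case 1
      then show False
        using young[of "(J + 1) / X"] X J by (simp add: field_simps) (smt (verit) mult_nonneg_nonneg)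
    next
      case 2
      then show False
        using young[of "X / (B + 1)"] X B by (simp add: field_simps) (smt (verit) mult_nonneg_nonneg)
    qed
  qed
qed

lemma
  fixes f g :: "'a \<Rightarrow> real"
  assumes [measurable]: "f \<in> borel_measurable M" "g \<in> borel_measurable M"
    and f2: "integrable M (\<lambda>x. (f x)\<^sup>2)" and g2: "integrable M (\<lambda>x. (g x)\<^sup>2)"
  shows integrable_mult_of_square_integrable: "integrable M (\<lambda>x. f x * g x)"
    and integral_mult_le_sqrt_integral_square:
      "(\<integral>x. f x * g x \<partial>M) \<le> sqrt ((\<integral>x. (f x)\<^sup>2 \<partial>M) * (\<integral>x. (g x)\<^sup>2 \<partial>M))"
proof -
  have young: "f x * g x \<le> e * (f x)\<^sup>2 / 2 + (g x)\<^sup>2 / (2 * e)" if "e > 0" for e x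
  proof -
    have "0 \<le> (e * f x - g x)\<^sup>2" by simp
    then show ?thesis using that by (simp add: field_simps power2_eq_square)
  qed
  have bound: "norm (f x * g x) \<le> (f x)\<^sup>2 / 2 + (g x)\<^sup>2 / 2" for x
  proof -
    have "0 \<le> (\<bar>f x\<bar> - \<bar>g x\<bar>)\<^sup>2" by simp
    then show ?thesis by (simp add: abs_mult power2_eq_square algebra_simps)
  qed
  show fg: "integrable M (\<lambda>x. f x * g x)"
    by (rule Bochner_Integration.integrable_bound[where f="\<lambda>x. (f x)\<^sup>2 / 2 + (g x)\<^sup>2 / 2"])
       (use f2 g2 bound in auto)
  show "(\<integral>x. f x * g x \<partial>M) \<le> sqrt ((\<integral>x. (f x)\<^sup>2 \<partial>M) * (\<integral>x. (g x)\<^sup>2 \<partial>M))"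
  proof (rule le_sqrt_mult_of_young_bounds)
    fix e :: real assume "e > 0"
    then have "(\<integral>x. f x * g x \<partial>M) \<le> (\<integral>x. e * (f x)\<^sup>2 / 2 + (g x)\<^sup>2 / (2 * e) \<partial>M)"
      using fg f2 g2 young by (intro integral_mono) auto
    also have "\<dots> = e * (\<integral>x. (f x)\<^sup>2 \<partial>M) / 2 + (\<integral>x. (g x)\<^sup>2 \<partial>M) / (2 * e)"
      using f2 g2 by simp
    finally show "(\<integral>x. f x * g x \<partial>M) \<le> e * (\<integral>x. (f x)\<^sup>2 \<partial>M) / 2 + (\<integral>x. (g x)\<^sup>2 \<partial>M) / (2 * e)" .
  qed auto
qed

lemma borel_measurable_cis [measurable]: "cis \<in> borel_measurable borel"
  by (intro borel_measurable_continuous_onI continuous_intros)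

lemma norm_schr_sub_stationary_phase_le:
  fixes f :: "real \<Rightarrow> complex"
  assumes t: "t > 0" and f_meas [measurable]: "f \<in> borel_measurable lborel"
  shows "cmod (schr t f x - cis (x\<^sup>2 / (4 * t)) / csqrt (4 * \<i> * complex_of_real pi * complex_of_real t)
                 * fourier f (x / (2 * t)))
         \<le> (\<integral>y. cmod (cis (y\<^sup>2 / (4 * t)) - 1) * cmod (f y) \<partial>lborel) / sqrt (4 * pi * t)"
proof -
  define c where "c = csqrt (4 * \<i> * complex_of_real pi * complex_of_real t)"
  define k where "k = (\<lambda>y. cis ((x - y)\<^sup>2 / (4 * t)) * f y)"
  define l where "l = (\<lambda>y. cis (- (x / (2 * t) * y)) * f y)"
  have norm_c: "cmod c = sqrt (4 * pi * t)"
    using t by (simp add: c_def norm_mult)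
  have k_meas: "k \<in> borel_measurable lborel" and l_meas: "l \<in> borel_measurable lborel"
    unfolding k_def l_def by measurable
  have "integrable lborel k \<longleftrightarrow> integrable lborel f" "integrable lborel l \<longleftrightarrow> integrable lborel f"
    using integrable_norm_iff[OF k_meas] integrable_norm_iff[OF l_meas] integrable_norm_iff[OF f_meas]
    by (simp_all add: k_def l_def norm_mult)
  moreover have "schr t f x = integral\<^sup>L lborel k / c" "fourier f (x / (2 * t)) = integral\<^sup>L lborel l"
    by (simp_all add: schr_def fourier_def k_def l_def c_def)
  moreover have "0 \<le> (\<integral>y. cmod (cis (y\<^sup>2 / (4 * t)) - 1) * cmod (f y) \<partial>lborel) / sqrt (4 * pi * t)"
    using t by (intro divide_nonneg_nonneg integral_nonneg_AE) auto
  ultimately show ?thesis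
  proof (cases "integrable lborel f")
    case True
    define h where "h = (\<lambda>y. k y - cis (x\<^sup>2 / (4 * t)) * l y)"
    have \<comment> \<open>expanding (x - y)^2 splits off the phase of the stationary-phase term\<close>
      "cis ((x - y)\<^sup>2 / (4 * t)) = cis (x\<^sup>2 / (4 * t)) * cis (- (x / (2 * t) * y)) * cis (y\<^sup>2 / (4 * t))" for y
      unfolding cis_mult using t by (simp add: field_simps power2_eq_square)
    then have "h y = cis (x\<^sup>2 / (4 * t)) * cis (- (x / (2 * t) * y)) * ((cis (y\<^sup>2 / (4 * t)) - 1) * f y)" for y
      unfolding h_def k_def l_def by (simp add: algebra_simps)
    then have norm_h: "norm (h y) = cmod (cis (y\<^sup>2 / (4 * t)) - 1) * cmod (f y)" for y
      by (simp add: norm_mult)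
    have "norm (integral\<^sup>L lborel h) \<le> (\<integral>y. norm (h y) \<partial>lborel)"
      by (rule integral_norm_bound)
    moreover have "schr t f x - cis (x\<^sup>2 / (4 * t)) / c * fourier f (x / (2 * t)) = integral\<^sup>L lborel h / c"
      using True \<open>schr t f x = _\<close> \<open>fourier f _ = _\<close> \<open>integrable lborel k \<longleftrightarrow> _\<close> \<open>integrable lborel l \<longleftrightarrow> _\<close>
      by (simp add: h_def diff_divide_distrib mult.commute)
    ultimately show ?thesis
      using t by (simp add: c_def[symmetric] norm_divide norm_c norm_h divide_right_mono)
    (* for non-integrable f both Bochner integrals are 0 by convention *)
  qed (simp add: c_def[symmetric] not_integrable_integral_eq)
qed

lemma integral_norm_cis_sub_one_mult_le:
  fixes f :: "real \<Rightarrow> complex"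
  assumes t: "t > 0" and [measurable]: "f \<in> borel_measurable lborel"
    and xf: "integrable lborel (\<lambda>y. (y * cmod (f y))\<^sup>2)"
  shows "(\<integral>y. cmod (cis (y\<^sup>2 / (4 * t)) - 1) * cmod (f y) \<partial>lborel)
         \<le> sqrt (9 * pi / (2 * sqrt t) * (\<integral>y. (y * cmod (f y))\<^sup>2 \<partial>lborel))"
proof -
  define G where "G y = 3 * \<bar>y\<bar> / (4 * t + y\<^sup>2)" for y :: real
  define \<phi> where "\<phi> y = \<bar>y\<bar> * cmod (f y)" for y
  have [measurable]: "G \<in> borel_measurable lborel" "\<phi> \<in> borel_measurable lborel"
    unfolding G_def \<phi>_def by measurable
  have den: "4 * t + y\<^sup>2 > 0" for y using t by (simp add: add_pos_nonneg)
  have \<phi>_sq: "(\<phi> y)\<^sup>2 = (y * cmod (f y))\<^sup>2" for y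
    by (simp add: \<phi>_def power_mult_distrib)
  have pointwise: "cmod (cis (y\<^sup>2 / (4 * t)) - 1) * cmod (f y) \<le> G y * \<phi> y" for y
  proof -
    have "cmod (cis (y\<^sup>2 / (4 * t)) - 1) \<le> 3 * (y\<^sup>2 / (4 * t)) / (1 + y\<^sup>2 / (4 * t))"
      using t by (intro norm_cis_minus_one_le_ratio) simp
    also have "\<dots> = G y * \<bar>y\<bar>"
      using t den[of y] by (simp add: G_def field_simps power2_eq_square)
    finally show ?thesis
      unfolding \<phi>_def mult.assoc[symmetric] by (rule mult_right_mono) simp
  qed
  have G_sq_le: "(G y)\<^sup>2 \<le> 9 * (1 / (4 * t + y\<^sup>2))" for y
  proof -
    have "(G y)\<^sup>2 = 9 * y\<^sup>2 / (4 * t + y\<^sup>2)\<^sup>2"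
      by (simp add: G_def power_divide power_mult_distrib)
    also have "\<dots> \<le> 9 * (4 * t + y\<^sup>2) / (4 * t + y\<^sup>2)\<^sup>2"
      using t by (intro divide_right_mono) auto
    also have "\<dots> = 9 * (1 / (4 * t + y\<^sup>2))"
    proof -
      have "9 * D / D\<^sup>2 = 9 * (1 / D)" if "D \<noteq> 0" for D :: real
        using that by (simp add: power2_eq_square)
      from this[of "4 * t + y\<^sup>2"] show ?thesis using den[of y] by simp
    qed
    finally show ?thesis .
  qed
  have kernel_int: "integrable lborel (\<lambda>y. 9 * (1 / (4 * t + y\<^sup>2)))"
    using t by (intro integrable_mult_right integrable_inverse_add_square(1)) simp
  have G_sq_int: "integrable lborel (\<lambda>y. (G y)\<^sup>2)"
    by (rule Bochner_Integration.integrable_bound[OF kernel_int])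
       (use G_sq_le den in \<open>auto simp: abs_of_pos\<close>)
  have "(\<integral>y. (G y)\<^sup>2 \<partial>lborel) \<le> (\<integral>y. 9 * (1 / (4 * t + y\<^sup>2)) \<partial>lborel)"
    using G_sq_int kernel_int G_sq_le by (intro integral_mono) auto
  also have "\<dots> = 9 * (\<integral>y. 1 / (4 * t + y\<^sup>2) \<partial>lborel)"
    by (rule integral_mult_right_zero)
  also have "\<dots> = 9 * pi / (2 * sqrt t)"
    using integrable_inverse_add_square(2)[of "4 * t"] t by (simp add: real_sqrt_mult)
  finally have G_sq_integral: "(\<integral>y. (G y)\<^sup>2 \<partial>lborel) \<le> 9 * pi / (2 * sqrt t)" .
  have \<phi>_sq_int: "integrable lborel (\<lambda>y. (\<phi> y)\<^sup>2)"
    using xf by (simp add: \<phi>_sq)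
  have G\<phi>_int: "integrable lborel (\<lambda>y. G y * \<phi> y)"
    by (rule integrable_mult_of_square_integrable) (use G_sq_int \<phi>_sq_int in auto)
  have "(\<integral>y. cmod (cis (y\<^sup>2 / (4 * t)) - 1) * cmod (f y) \<partial>lborel) \<le> (\<integral>y. G y * \<phi> y \<partial>lborel)"
  proof (rule integral_mono[OF _ G\<phi>_int pointwise])
    show "integrable lborel (\<lambda>y. cmod (cis (y\<^sup>2 / (4 * t)) - 1) * cmod (f y))"
      by (rule Bochner_Integration.integrable_bound[OF G\<phi>_int])
         (use pointwise in \<open>auto intro: order_trans[OF _ abs_ge_self]\<close>)
  qed
  also have "\<dots> \<le> sqrt ((\<integral>y. (G y)\<^sup>2 \<partial>lborel) * (\<integral>y. (\<phi> y)\<^sup>2 \<partial>lborel))"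
    by (rule integral_mult_le_sqrt_integral_square) (use G_sq_int \<phi>_sq_int in auto)
  also have "\<dots> \<le> sqrt (9 * pi / (2 * sqrt t) * (\<integral>y. (y * cmod (f y))\<^sup>2 \<partial>lborel))"
    unfolding \<phi>_sq by (intro real_sqrt_le_mono mult_right_mono G_sq_integral integral_nonneg_AE) auto
  finally show ?thesis .
qed

lemma powr_neg_three_quarters: "t > 0 \<Longrightarrow> t powr (- 3 / 4) = sqrt (1 / (t * sqrt t))"
proof -
  assume t: "t > 0"
  have "t powr (3 / 2) = t powr (1 + 1 / 2)" by simp
  also have "\<dots> = t powr 1 * t powr (1 / 2)" by (rule powr_add)
  finally have "t * sqrt t = t powr (3 / 2)"
    using t by (simp add: powr_half_sqrt)
  then have "sqrt (1 / (t * sqrt t)) = (t powr (- 3 / 2)) powr (1 / 2)"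
    using t by (simp add: powr_minus_divide powr_half_sqrt)
  also have "\<dots> = t powr (- 3 / 4)" by (simp add: powr_powr)
  finally show ?thesis ..
qed

theorem norm_schr_sub_stationary_phase_le_powr:
  fixes f :: "real \<Rightarrow> complex"
  assumes t: "t > 0" and f_meas: "f \<in> borel_measurable lborel"
    and xf: "integrable lborel (\<lambda>y. (y * cmod (f y))\<^sup>2)"
  shows "cmod (schr t f x - cis (x\<^sup>2 / (4 * t)) / csqrt (4 * \<i> * complex_of_real pi * complex_of_real t)
                 * fourier f (x / (2 * t)))
         \<le> 2 * t powr (- 3 / 4) * sqrt (\<integral>y. (y * cmod (f y))\<^sup>2 \<partial>lborel)"
proof -
  define J where "J = (\<integral>y. (y * cmod (f y))\<^sup>2 \<partial>lborel)"
  have J: "J \<ge> 0" unfolding J_def by (rule integral_nonneg_AE) auto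
  note norm_schr_sub_stationary_phase_le[OF t f_meas]
  also have "(\<integral>y. cmod (cis (y\<^sup>2 / (4 * t)) - 1) * cmod (f y) \<partial>lborel) / sqrt (4 * pi * t)
      \<le> sqrt (9 * pi / (2 * sqrt t) * J) / sqrt (4 * pi * t)"
    unfolding J_def using integral_norm_cis_sub_one_mult_le[OF t f_meas xf]
    by (rule divide_right_mono) (use t in simp)
  also have "\<dots> = sqrt (9 / 8 * (1 / (t * sqrt t)) * J)"
    using t by (simp add: real_sqrt_divide[symmetric] field_simps)
  also have "\<dots> \<le> sqrt (4 * (1 / (t * sqrt t)) * J)"
    using t J by (intro real_sqrt_le_mono mult_right_mono) auto
  also have "\<dots> = 2 * t powr (- 3 / 4) * sqrt J"
    unfolding real_sqrt_mult powr_neg_three_quarters[OF t] by simp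
  finally show ?thesis unfolding J_def .
qed

lemma power2_esqrt [simp]: "(esqrt v)\<^sup>2 = v"
  by (cases v rule: ennreal_cases) (simp add: esqrt_def ennreal_power, simp add: esqrt_def power2_eq_square)

lemma esqrt_power2 [simp]: "esqrt (w\<^sup>2) = w"
  by (cases w rule: ennreal_cases) (simp add: esqrt_def ennreal_power, simp add: esqrt_def power2_eq_square)

lemma esqrt_mono: "v \<le> w \<Longrightarrow> esqrt v \<le> esqrt w"
proof (cases w rule: ennreal_cases)
  case (real r)
  moreover assume "v \<le> w"
  ultimately obtain q where "v = ennreal q" "0 \<le> q" "q \<le> r"
    by (metis ennreal_cases ennreal_le_iff top.extremum_unique ennreal_neq_top)
  with real show ?thesis by (simp add: esqrt_def)
qed (simp add: esqrt_def)

lemma esqrt_le_of_le_power2: "v \<le> w\<^sup>2 \<Longrightarrow> esqrt v \<le> w"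
  using esqrt_mono esqrt_power2 by metis

lemma borel_measurable_nn_integral_count_space:
  fixes f :: "'i \<Rightarrow> 'a \<Rightarrow> ennreal"
  assumes I: "countable I" and f: "\<And>i. i \<in> I \<Longrightarrow> f i \<in> borel_measurable M"
  shows "(\<lambda>x. \<integral>\<^sup>+ i. f i x \<partial>count_space I) \<in> borel_measurable M"
proof -
  interpret count: sigma_finite_measure "count_space I"
    using I by (rule sigma_finite_measure_count_space_countable)
  have "(\<lambda>(x, i). f i x) \<in> borel_measurable (M \<Otimes>\<^sub>M count_space I)"
    using measurable_compose_countable'[where f="\<lambda>i p. f i (fst p)" and g=snd and I=I] f I
    by (simp add: case_prod_beta')
  then show ?thesis by (rule count.borel_measurable_nn_integral)
qed

definition hs_sum :: "(nat \<Rightarrow> (int^'d) set) \<Rightarrow> real \<Rightarrow> (int^'d \<Rightarrow> ennreal) \<Rightarrow> ennreal" where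
  "hs_sum Cl s w = (\<Sum>\<alpha>. ennreal (Kc Cl \<alpha> powr (2 * s)) * (\<integral>\<^sup>+ n. w n \<partial>count_space (Cl \<alpha>)))"

lemma hs_sq_eq_hs_sum: "hs_sq Cl s u = hs_sum Cl s (\<lambda>n. ennreal ((cmod (u n))\<^sup>2))"
  by (simp add: hs_sq_def hs_sum_def)

lemma hs_sum_mono: "(\<And>n. w n \<le> w' n) \<Longrightarrow> hs_sum Cl s w \<le> hs_sum Cl s w'"
  unfolding hs_sum_def by (intro suminf_le mult_left_mono nn_integral_mono) auto

lemma hs_sum_add_cmult:
  "hs_sum Cl s (\<lambda>n. a * w n + b * w' n) = a * hs_sum Cl s w + b * hs_sum Cl s w'"
proof -
  have "ennreal (Kc Cl \<alpha> powr (2 * s)) * (\<integral>\<^sup>+ n. a * w n + b * w' n \<partial>count_space (Cl \<alpha>))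
     = a * (ennreal (Kc Cl \<alpha> powr (2 * s)) * (\<integral>\<^sup>+ n. w n \<partial>count_space (Cl \<alpha>)))
       + b * (ennreal (Kc Cl \<alpha> powr (2 * s)) * (\<integral>\<^sup>+ n. w' n \<partial>count_space (Cl \<alpha>)))" for \<alpha>
    by (simp add: nn_integral_add nn_integral_cmult algebra_simps)
  then show ?thesis
    unfolding hs_sum_def by (simp add: suminf_add[symmetric] ennreal_suminf_cmult)
qed

lemma hs_sum_nn_integral:
  fixes g :: "int^'d \<Rightarrow> real \<Rightarrow> ennreal"
  assumes g: "\<And>n. g n \<in> borel_measurable lborel"
  shows "hs_sum Cl s (\<lambda>n. \<integral>\<^sup>+ y. g n y \<partial>lborel) = (\<integral>\<^sup>+ y. hs_sum Cl s (\<lambda>n. g n y) \<partial>lborel)"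
proof -
  have countable: "countable (Cl \<alpha>)" for \<alpha>
    by (rule countable_subset[OF subset_UNIV]) simp
  have [measurable]: "(\<lambda>y. \<integral>\<^sup>+ n. g n y \<partial>count_space (Cl \<alpha>)) \<in> borel_measurable lborel" for \<alpha>
    using countable g by (rule borel_measurable_nn_integral_count_space)
  have "(\<integral>\<^sup>+ y. hs_sum Cl s (\<lambda>n. g n y) \<partial>lborel)
      = (\<Sum>\<alpha>. ennreal (Kc Cl \<alpha> powr (2 * s)) * (\<integral>\<^sup>+ y. (\<integral>\<^sup>+ n. g n y \<partial>count_space (Cl \<alpha>)) \<partial>lborel))"
    unfolding hs_sum_def by (simp add: nn_integral_suminf nn_integral_cmult)
  also have "\<dots> = hs_sum Cl s (\<lambda>n. \<integral>\<^sup>+ y. g n y \<partial>lborel)"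
    unfolding hs_sum_def using countable g by (simp add: nn_integral_count_space_nn_integral)
  finally show ?thesis ..
qed

lemma norm_schr_square_le:
  fixes g :: "real \<Rightarrow> complex"
  assumes t: "t > 0" and g_meas: "g \<in> borel_measurable lborel"
    and xg: "integrable lborel (\<lambda>y. (y * cmod (g y))\<^sup>2)"
  shows "(cmod (schr t g x))\<^sup>2 \<le> 2 * pi / t * (cmod (fourierN g (x / (2 * t))))\<^sup>2
           + 8 * t powr (- 3 / 2) * (\<integral>y. (y * cmod (g y))\<^sup>2 \<partial>lborel)"
proof -
  define J where "J = (\<integral>y. (y * cmod (g y))\<^sup>2 \<partial>lborel)"
  define L where "L = cis (x\<^sup>2 / (4 * t)) / csqrt (4 * \<i> * complex_of_real pi * complex_of_real t)
                        * fourier g (x / (2 * t))"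
  define E where "E = 2 * t powr (- 3 / 4) * sqrt J"
  have J: "J \<ge> 0" unfolding J_def by (rule integral_nonneg_AE) auto
  have "cmod (schr t g x - L) \<le> E"
    unfolding L_def E_def J_def by (rule norm_schr_sub_stationary_phase_le_powr[OF t g_meas xg])
  then have "cmod (schr t g x) \<le> cmod L + E"
    using norm_triangle_sub[of "schr t g x" L] by simp
  then have "(cmod (schr t g x))\<^sup>2 \<le> (cmod L + E)\<^sup>2"
    by (intro power_mono) auto
  also have "\<dots> \<le> 2 * (cmod L)\<^sup>2 + 2 * E\<^sup>2"
    using sum_squares_ge_zero[of "cmod L - E" 0] by (simp add: power2_eq_square algebra_simps)
  also have "(cmod L)\<^sup>2 = pi / t * (cmod (fourierN g (x / (2 * t))))\<^sup>2"
    using t by (simp add: L_def fourierN_def norm_mult norm_divide power_divide power_mult_distrib)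
      (simp add: field_simps power2_eq_square)
  also have "E\<^sup>2 = 4 * t powr (- 3 / 2) * J"
  proof -
    have "(t powr (- 3 / 4))\<^sup>2 = t powr (- 3 / 2)"
      by (simp add: power2_eq_square flip: powr_add)
    then show ?thesis using J by (simp add: E_def power_mult_distrib)
  qed
  finally show ?thesis unfolding J_def by simp
qed

lemma ennreal_norm_schr_square_le:
  fixes g :: "real \<Rightarrow> complex"
  assumes t: "t > 0" and g_meas [measurable]: "g \<in> borel_measurable lborel"
  shows "ennreal ((cmod (schr t g x))\<^sup>2)
         \<le> ennreal (2 * pi / t) * ennreal ((cmod (fourierN g (x / (2 * t))))\<^sup>2)
           + ennreal (8 * t powr (- 3 / 2)) * (\<integral>\<^sup>+ y. ennreal ((cmod (complex_of_real y * g y))\<^sup>2) \<partial>lborel)"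
proof -
  have xg_eq: "(\<lambda>y. ennreal ((cmod (complex_of_real y * g y))\<^sup>2)) = (\<lambda>y. ennreal ((y * cmod (g y))\<^sup>2))"
    by (simp add: norm_mult power_mult_distrib)
  show ?thesis
  proof (cases "integrable lborel (\<lambda>y. (y * cmod (g y))\<^sup>2)")
    case True
    have "(\<integral>\<^sup>+ y. ennreal ((y * cmod (g y))\<^sup>2) \<partial>lborel) = ennreal (\<integral>y. (y * cmod (g y))\<^sup>2 \<partial>lborel)"
      using True by (rule nn_integral_eq_integral) auto
    moreover have "(\<integral>y. (y * cmod (g y))\<^sup>2 \<partial>lborel) \<ge> 0" by (rule integral_nonneg_AE) auto
    ultimately show ?thesis
      using norm_schr_square_le[OF t g_meas True, of x] t unfolding xg_eq
      by (simp add: ennreal_plus[symmetric] ennreal_mult[symmetric] ennreal_leI del: ennreal_plus)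
  next
    case False
    have "(\<integral>\<^sup>+ y. ennreal ((y * cmod (g y))\<^sup>2) \<partial>lborel) = \<infinity>"
    proof (rule ccontr)
      assume "(\<integral>\<^sup>+ y. ennreal ((y * cmod (g y))\<^sup>2) \<partial>lborel) \<noteq> \<infinity>"
      then have "integrable lborel (\<lambda>y. (y * cmod (g y))\<^sup>2)"
        by (intro integrableI_nonneg) (auto simp: top.not_eq_extremum)
      with False show False ..
    qed
    then show ?thesis using t unfolding xg_eq by simp
  qed
qed

lemma hs_norm_evol_le:
  fixes A :: "real^'d^'d" and G :: "real \<Rightarrow> int^'d \<Rightarrow> complex"
  assumes t: "t > 0" and G_meas: "\<And>n. (\<lambda>y. G y n) \<in> borel_measurable lborel"
  shows "hs_norm Cl s (evol A t G x)
         \<le> ennreal (sqrt (2 * pi / t)) * Z_norm Cl s G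
           + ennreal (sqrt 8 * t powr (- 3 / 4)) * L2hs Cl s (\<lambda>y n. complex_of_real y * G y n)"
    (is "_ \<le> ennreal ?a * ?Z + ennreal ?b * ?W")
proof -
  define v where "v n = fourierN (\<lambda>y. G y n) (x / (2 * t))" for n
  define g where "g n y = ennreal ((cmod (complex_of_real y * G y n))\<^sup>2)" for n y
  have g_meas: "g n \<in> borel_measurable lborel" for n
    unfolding g_def using G_meas[of n] by measurable
  have "hs_sq Cl s v \<le> ?Z\<^sup>2"
  proof -
    have "hs_norm Cl s v \<le> ?Z"
      unfolding Z_norm_def v_def by (rule SUP_upper) simp
    then show ?thesis
      unfolding hs_norm_def by (metis power2_esqrt power_mono zero_le)
  qed
  have W_sq: "?W\<^sup>2 = hs_sum Cl s (\<lambda>n. \<integral>\<^sup>+ y. g n y \<partial>lborel)"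
    using hs_sum_nn_integral[OF g_meas, of Cl s] by (simp add: L2hs_def hs_sq_eq_hs_sum g_def)
  have "hs_sq Cl s (evol A t G x)
        \<le> hs_sum Cl s (\<lambda>n. ennreal (2 * pi / t) * ennreal ((cmod (v n))\<^sup>2)
                            + ennreal (8 * t powr (- 3 / 2)) * (\<integral>\<^sup>+ y. g n y \<partial>lborel))"
    unfolding hs_sq_eq_hs_sum
  proof (rule hs_sum_mono)
    fix n
    have "cmod (evol A t G x n) = cmod (schr t (\<lambda>y. G y n) x)"
      by (simp add: evol_def norm_mult)
    then show "ennreal ((cmod (evol A t G x n))\<^sup>2)
               \<le> ennreal (2 * pi / t) * ennreal ((cmod (v n))\<^sup>2)
                 + ennreal (8 * t powr (- 3 / 2)) * (\<integral>\<^sup>+ y. g n y \<partial>lborel)"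
      using ennreal_norm_schr_square_le[OF t G_meas[of n], of x] by (simp add: v_def g_def)
  qed
  also have "\<dots> = ennreal (2 * pi / t) * hs_sq Cl s v + ennreal (8 * t powr (- 3 / 2)) * ?W\<^sup>2"
    unfolding hs_sum_add_cmult W_sq hs_sq_eq_hs_sum ..
  also have "\<dots> \<le> ennreal (?a\<^sup>2) * ?Z\<^sup>2 + ennreal (?b\<^sup>2) * ?W\<^sup>2"
  proof -
    have "(t powr (- 3 / 4))\<^sup>2 = t powr (- 3 / 2)"
      by (simp add: power2_eq_square flip: powr_add)
    then have "?a\<^sup>2 = 2 * pi / t" "?b\<^sup>2 = 8 * t powr (- 3 / 2)"
      using t by (simp_all add: power_mult_distrib)
    with \<open>hs_sq Cl s v \<le> ?Z\<^sup>2\<close> show ?thesis by (simp add: mult_left_mono)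
  qed
  also have "\<dots> \<le> (ennreal ?a * ?Z + ennreal ?b * ?W)\<^sup>2"
    using t by (simp add: power2_sum power_mult_distrib ennreal_power)
  finally show ?thesis
    unfolding hs_norm_def by (rule esqrt_le_of_le_power2)
qed

theorem Linf_hs_evol_le:
  fixes A :: "real^'d^'d" and G :: "real \<Rightarrow> int^'d \<Rightarrow> complex"
  assumes t: "t > 0"
  shows "ennreal (t powr (1 / 2)) * Linf_hs Cl s (evol A t G)
         \<le> ennreal 3 * (Z_norm Cl s G + ennreal (t powr (- 1 / 4)) * S_norm Cl s \<sigma> G)"
proof (cases "admissible G")
  case True
  define Z where "Z = Z_norm Cl s G"
  define W where "W = L2hs Cl s (\<lambda>y n. complex_of_real y * G y n)"
  have G_meas: "(\<lambda>y. G y n) \<in> borel_measurable lborel" for n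
    using True unfolding admissible_def by (blast intro: borel_measurable_integrable)
  have Z_coeff: "t powr (1 / 2) * sqrt (2 * pi / t) \<le> 3"
  proof -
    have "t powr (1 / 2) * sqrt (2 * pi / t) = sqrt (2 * pi)"
      using t by (simp add: powr_half_sqrt real_sqrt_mult[symmetric])
    also have "\<dots> \<le> sqrt 9" using pi_less_4 by (intro real_sqrt_le_mono) simp
    finally show ?thesis by simp
  qed
  have W_coeff: "t powr (1 / 2) * (sqrt 8 * t powr (- 3 / 4)) \<le> 3 * t powr (- 1 / 4)"
  proof -
    have "t powr (1 / 2) * t powr (- 3 / 4) = t powr (- 1 / 4)" by (simp flip: powr_add)
    moreover have "sqrt 8 \<le> (3::real)" using real_sqrt_le_mono[of 8 9] by simp
    ultimately show ?thesis by (simp add: mult.left_commute mult_right_mono)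
  qed
  have pointwise: "ennreal (t powr (1 / 2)) * hs_norm Cl s (evol A t G x)
                   \<le> ennreal 3 * Z + ennreal (3 * t powr (- 1 / 4)) * W" for x
  proof -
    have "ennreal (t powr (1 / 2)) * hs_norm Cl s (evol A t G x)
          \<le> ennreal (t powr (1 / 2)) * (ennreal (sqrt (2 * pi / t)) * Z + ennreal (sqrt 8 * t powr (- 3 / 4)) * W)"
      unfolding Z_def W_def by (intro mult_left_mono hs_norm_evol_le[OF t G_meas]) simp
    also have "\<dots> = ennreal (t powr (1 / 2) * sqrt (2 * pi / t)) * Z
                    + ennreal (t powr (1 / 2) * (sqrt 8 * t powr (- 3 / 4))) * W"
      using t by (simp add: distrib_left ennreal_mult mult.assoc)
    also have "\<dots> \<le> ennreal 3 * Z + ennreal (3 * t powr (- 1 / 4)) * W"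
      using Z_coeff W_coeff by (intro add_mono mult_right_mono ennreal_leI) auto
    finally show ?thesis .
  qed
  have "ennreal (t powr (1 / 2)) * Linf_hs Cl s (evol A t G)
        = (SUP x. ennreal (t powr (1 / 2)) * hs_norm Cl s (evol A t G x))"
    unfolding Linf_hs_def by (rule SUP_mult_left_ennreal)
  also have "\<dots> \<le> ennreal 3 * Z + ennreal (3 * t powr (- 1 / 4)) * W"
    by (rule SUP_least) (rule pointwise)
  also have "\<dots> \<le> ennreal 3 * (Z + ennreal (t powr (- 1 / 4)) * S_norm Cl s \<sigma> G)"
  proof -
    have "W \<le> S_norm Cl s \<sigma> G" using True by (simp add: S_norm_def W_def)
    then have "ennreal (3 * t powr (- 1 / 4)) * W \<le> ennreal 3 * (ennreal (t powr (- 1 / 4)) * S_norm Cl s \<sigma> G)"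
      by (simp add: ennreal_mult mult.assoc mult_left_mono)
    then show ?thesis by (simp add: distrib_left add_left_mono)
  qed
  finally show ?thesis unfolding Z_def .
qed (use t in \<open>simp add: S_norm_def\<close>)

lemma powr_neg_quarter_le_jbr_powr:
  assumes t: "t \<ge> 1" and \<delta>: "0 \<le> \<delta>" "\<delta> \<le> 1 / 4"
  shows "t powr (- 1 / 4) \<le> 2 * jbr t powr (- \<delta>)"
proof -
  have "1 \<le> t * t" using mult_mono[of 1 t 1 t] t by simp
  then have "jbr t \<le> sqrt ((2 * t)\<^sup>2)"
    unfolding jbr_def by (intro real_sqrt_le_mono) (simp add: power2_eq_square)
  then have jbr_le: "jbr t \<le> 2 * t" using t by (simp only: real_sqrt_abs)
  have "t powr (- 1 / 4) \<le> t powr (- \<delta>)"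
    using t \<delta> by (intro powr_mono) auto
  also have "\<dots> = 2 * (2 powr (- 1) * t powr (- \<delta>))"
    by (simp add: powr_minus)
  also have "\<dots> \<le> 2 * (2 powr (- \<delta>) * t powr (- \<delta>))"
    using \<delta> by (intro mult_left_mono mult_right_mono powr_mono) auto
  also have "\<dots> = 2 * (2 * t) powr (- \<delta>)"
    using t by (simp add: powr_mult)
  also have "\<dots> \<le> 2 * jbr t powr (- \<delta>)"
    using jbr_le \<delta> by (intro mult_left_mono powr_mono2') (auto simp: jbr_def add_pos_nonneg)
  finally show ?thesis .
qed

lemma Z_S_le_X_norm:
  assumes \<delta>: "0 \<le> \<delta>" "\<delta> \<le> 1 / 4" and t: "1 \<le> t" "t \<le> T"
  shows "Z_norm Cl s (F t) + ennreal (t powr (- 1 / 4)) * S_norm Cl s \<sigma> (F t)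
         \<le> ennreal 2 * X_norm Cl s \<sigma> \<delta> T F"
proof -
  define Z where "Z = Z_norm Cl s (F t)"
  define S where "S = S_norm Cl s \<sigma> (F t)"
  have "Z + ennreal (t powr (- 1 / 4)) * S \<le> Z + ennreal (2 * jbr t powr (- \<delta>)) * S"
    using powr_neg_quarter_le_jbr_powr[OF t(1) \<delta>]
    by (intro add_left_mono mult_right_mono ennreal_leI) auto
  also have "\<dots> \<le> ennreal 2 * (Z + ennreal (jbr t powr (- \<delta>)) * S)"
  proof -
    have "Z \<le> ennreal 2 * Z"
      using add_increasing2[OF zero_le order_refl, of Z Z] by (simp add: mult_2)
    moreover have "ennreal (2 * jbr t powr (- \<delta>)) * S = ennreal 2 * (ennreal (jbr t powr (- \<delta>)) * S)"
      by (simp add: ennreal_mult mult.assoc)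
    ultimately show ?thesis
      by (simp add: distrib_left add_right_mono)
  qed
  also have "\<dots> \<le> ennreal 2 * X_norm Cl s \<sigma> \<delta> T F"
  proof (rule mult_left_mono)
    have "Z + ennreal (jbr t powr (- \<delta>)) * S
          \<le> Z + ennreal (jbr t powr (- \<delta>)) * S + ennreal (jbr t powr (1 - \<delta>)) * dt_S_norm Cl s \<sigma> T F t"
      by simp
    also have "\<dots> \<le> X_norm Cl s \<sigma> \<delta> T F"
      unfolding X_norm_def Z_def S_def by (rule SUP_upper) (use t in auto)
    finally show "Z + ennreal (jbr t powr (- \<delta>)) * S \<le> X_norm Cl s \<sigma> \<delta> T F" .
  qed simp
  finally show ?thesis unfolding Z_def S_def .
qed

theorem lemma2p11:
  fixes A :: "real^'d^'d" and Cl :: "nat \<Rightarrow> (int^'d) set" and s \<sigma> :: real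
  assumes symA: "transpose A = A"
    and posA: "\<forall>v::real^'d. v \<noteq> 0 \<longrightarrow> v \<bullet> (A *v v) > 0"
    and clusters: "cluster_partition Cl"
    and s_gt: "s > real CARD('d) / 2"
    and sigma_pos: "\<sigma> > 0"
  shows
   "(\<exists>C>0. \<forall>(f::real \<Rightarrow> complex) (t::real).
        f \<in> borel_measurable lborel \<and> integrable lborel (\<lambda>x. (cmod (f x))\<^sup>2) \<and>
        integrable lborel (\<lambda>x. (x * cmod (f x))\<^sup>2) \<and> t > 0 \<longrightarrow>
        (\<forall>x. cmod (schr t f x - cis (x\<^sup>2 / (4 * t)) / csqrt (4 * \<i> * complex_of_real pi * complex_of_real t)
                        * fourier f (x / (2 * t)))
             \<le> C * t powr (- 3 / 4) * sqrt (\<integral>y. (y * cmod (f y))\<^sup>2 \<partial>lborel)))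
    \<and> (\<exists>C>0. \<forall>T\<ge>1. \<forall>t\<in>{1..T}. \<forall>F :: real \<Rightarrow> real \<Rightarrow> int^'d \<Rightarrow> complex.
        ennreal (t powr (1 / 2)) * Linf_hs Cl s (evol A t (F t))
          \<le> ennreal C * (Z_norm Cl s (F t) + ennreal (t powr (- 1 / 4)) * S_norm Cl s \<sigma> (F t)))
    \<and> (\<exists>\<delta>0>0. \<forall>\<delta>. 0 < \<delta> \<and> \<delta> < \<delta>0 \<longrightarrow>
        (\<exists>C>0. \<forall>T\<ge>1. \<forall>t\<in>{1..T}. \<forall>F :: real \<Rightarrow> real \<Rightarrow> int^'d \<Rightarrow> complex.
           Z_norm Cl s (F t) + ennreal (t powr (- 1 / 4)) * S_norm Cl s \<sigma> (F t)
             \<le> ennreal C * X_norm Cl s \<sigma> \<delta> T F))"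
  apply (intro conjI)
  subgoal
    apply (rule exI[of _ 2], intro conjI allI impI)
     apply simp
    by (rule norm_schr_sub_stationary_phase_le_powr) auto
  subgoal
    apply (rule exI[of _ 3], intro conjI allI impI ballI)
     apply simp
    by (rule Linf_hs_evol_le) simp
  subgoal
    apply (rule exI[of _ "1 / 4"], intro conjI allI impI)
     apply simp
    apply (rule exI[of _ 2], intro conjI allI impI ballI)
     apply simp
    by (rule Z_S_le_X_norm) auto
  done

end
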